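(* Let $m\geq 1$ be an integer and $\omega\in[-1,1]$. The function $$W_{m,\omega}(x)=m-1-\frac{m}{1-x}+\frac{1-\omega x}{(1-x)^{m+1}(1-2\omega x+x^2)}$$ is absolutely monotonic on $(0,1)$, i.e. it has derivatives of all orders there and $W_{m,\omega}^{(n)}(x)\geq 0$ for all $n=0,1,2,\dots$ and all $x\in(0,1)$. *)

theory Defs
  imports "HOL-Analysis.Analysis"
begin

definition absolutely_monotonic_on :: "real set \<Rightarrow> (real \<Rightarrow> real) \<Rightarrow> bool" where
  "absolutely_monotonic_on S f \<longleftrightarrow>
     (\<exists>D :: nat \<Rightarrow> real \<Rightarrow> real.
        (\<forall>x\<in>S. D 0 x = f x) \<and>
        (\<forall>n. \<forall>x\<in>S. (D n has_real_derivative D (Suc n) x) (at x)) \<and>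
        (\<forall>n. \<forall>x\<in>S. D n x \<ge> 0))"

definition W :: "nat \<Rightarrow> real \<Rightarrow> real \<Rightarrow> real" where
  "W m \<omega> x = real m - 1 - real m / (1 - x)
     + (1 - \<omega> * x) / ((1 - x) ^ (m + 1) * (1 - 2 * \<omega> * x + x ^ 2))"

end

theory Submission
  imports Defs
begin

text \<open>Write \<open>\<omega> = cos t\<close>. Then \<open>(1 - \<omega> x) / (1 - 2 \<omega> x + x\<^sup>2) = \<Sum>\<^sub>n cos (n t) x\<^sup>n\<close>,
and dividing by \<open>(1 - x)\<^sup>m\<^sup>+\<^sup>1\<close> turns the coefficients into \<open>(m + 1)\<close>-fold iterated partial
sums of \<open>cos (n t)\<close>. By Fej\'er's identity the twofold sums are at least \<open>(n + 1) / 2\<close>, hence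
the \<open>(m + 1)\<close>-fold sums are at least \<open>m\<close> for \<open>n \<ge> 1\<close>, which is exactly what the terms
\<open>m - 1 - m / (1 - x)\<close> subtract. So \<open>W\<^sub>m\<^sub>,\<^sub>\<omega>\<close> is a power series with nonnegative
coefficients converging on \<open>(-1, 1)\<close>, and such a function is absolutely monotonic on \<open>(0, 1)\<close>.\<close>

lemma funpow_diffs_nonneg:
  fixes c :: "nat \<Rightarrow> real"
  assumes "\<And>n. 0 \<le> c n"
  shows "0 \<le> (diffs ^^ j) c n"
  using assms by (induction j arbitrary: n) (auto simp: diffs_def)

lemma summable_funpow_diffs:
  fixes c :: "nat \<Rightarrow> 'a::{real_normed_field,banach}"
  assumes "\<And>x. norm x < r \<Longrightarrow> summable (\<lambda>n. c n * x ^ n)" and "norm x < r"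
  shows "summable (\<lambda>n. (diffs ^^ j) c n * x ^ n)"
  using assms(2)
proof (induction j arbitrary: x)
  case 0
  then show ?case using assms(1) by simp
next
  case (Suc j)
  then show ?case using termdiff_converges[of x r "(diffs ^^ j) c"] by simp
qed

lemma absolutely_monotonic_on_power_series:
  fixes c :: "nat \<Rightarrow> real"
  assumes nonneg: "\<And>n. 0 \<le> c n"
    and summable: "\<And>x. \<bar>x\<bar> < r \<Longrightarrow> summable (\<lambda>n. c n * x ^ n)"
    and f: "\<And>x. x \<in> S \<Longrightarrow> f x = (\<Sum>n. c n * x ^ n)"
    and S: "S \<subseteq> {0..<r}"
  shows "absolutely_monotonic_on S f"
  unfolding absolutely_monotonic_on_def
proof (intro exI conjI ballI allI)
  define D where "D j x = (\<Sum>n. (diffs ^^ j) c n * x ^ n)" for j x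
  fix j x assume "x \<in> S"
  then have x: "0 \<le> x" "\<bar>x\<bar> < r" using S by auto
  have summable_D: "summable (\<lambda>n. (diffs ^^ j) c n * x ^ n)" for j
    using summable_funpow_diffs[of r c x j] summable x by simp
  show "D 0 x = f x"
    using f \<open>x \<in> S\<close> by (simp add: D_def)
  show "(D j has_real_derivative D (Suc j) x) (at x)"
    using termdiffs_strong'[of r "(diffs ^^ j) c" x] summable_funpow_diffs[of r c _ j] summable x
    by (simp add: D_def[abs_def])
  show "0 \<le> D j x"
    unfolding D_def
    by (intro suminf_nonneg summable_D mult_nonneg_nonneg funpow_diffs_nonneg nonneg zero_le_power x)
qed

lemma partial_sums_power_series:
  fixes c :: "nat \<Rightarrow> real"
  assumes x: "\<bar>x\<bar> < 1" and c: "summable (\<lambda>n. \<bar>c n * x ^ n\<bar>)"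
  shows "summable (\<lambda>n. \<bar>(\<Sum>k\<le>n. c k) * x ^ n\<bar>)"
    and "(\<lambda>n. (\<Sum>k\<le>n. c k) * x ^ n) sums ((\<Sum>n. c n * x ^ n) / (1 - x))"
proof -
  define a where "a n = c n * x ^ n" for n
  define b where "b n = x ^ n" for n
  have sa: "summable (\<lambda>n. norm (a n))" using c by (simp add: a_def)
  have sb: "summable (\<lambda>n. norm (b n))"
    using x by (simp add: b_def power_abs summable_geometric)
  have convolution: "(\<Sum>i\<le>n. a i * b (n - i)) = (\<Sum>k\<le>n. c k) * x ^ n" for n
  proof -
    have "(\<Sum>i\<le>n. a i * b (n - i)) = (\<Sum>i\<le>n. c i * x ^ n)"
      by (rule sum.cong) (auto simp: a_def b_def mult.assoc power_add[symmetric])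
    then show ?thesis by (simp add: sum_distrib_right)
  qed
  have "summable (\<lambda>n. \<Sum>i\<le>n. norm (a i) * norm (b (n - i)))"
    using summable_Cauchy_product[of "\<lambda>i. norm (a i)" "\<lambda>i. norm (b i)"] sa sb by simp
  then show "summable (\<lambda>n. \<bar>(\<Sum>k\<le>n. c k) * x ^ n\<bar>)"
    by (rule summable_comparison_test[rotated])
       (use sum_abs[of "\<lambda>i. a i * b (n - i)" "{..n}" for n] in
        \<open>auto simp: convolution[symmetric] abs_mult\<close>)
  have "(\<lambda>n. \<Sum>i\<le>n. a i * b (n - i)) sums ((\<Sum>n. a n) * (\<Sum>n. b n))"
    by (rule Cauchy_product_sums[OF sa sb])
  moreover have "(\<Sum>n. b n) = 1 / (1 - x)"
    using geometric_sums[of x] x by (simp add: b_def sums_iff)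
  ultimately have "(\<lambda>n. \<Sum>i\<le>n. a i * b (n - i)) sums ((\<Sum>n. a n) / (1 - x))"
    by simp
  then show "(\<lambda>n. (\<Sum>k\<le>n. c k) * x ^ n) sums ((\<Sum>n. c n * x ^ n) / (1 - x))"
    unfolding convolution by (simp add: a_def)
qed

lemma summable_abs_cos_power_series:
  assumes "\<bar>x\<bar> < 1"
  shows "summable (\<lambda>n. \<bar>cos (real n * t) * x ^ n\<bar>)"
proof (rule summable_comparison_test)
  show "summable (\<lambda>n. \<bar>x\<bar> ^ n)" using assms by (simp add: summable_geometric)
  show "\<exists>N. \<forall>n\<ge>N. norm \<bar>cos (real n * t) * x ^ n\<bar> \<le> \<bar>x\<bar> ^ n"
    by (auto simp: abs_mult power_abs intro!: exI[of _ 0] mult_left_le_one_le)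
qed

lemma quadratic_denominator_pos:
  fixes c x :: real
  assumes "\<bar>c\<bar> \<le> 1" and "\<bar>x\<bar> < 1"
  shows "0 < 1 - 2 * c * x + x ^ 2"
proof -
  have "c * x \<le> \<bar>x\<bar>"
    using abs_ge_self[of "c * x"] mult_left_le_one_le[of "\<bar>x\<bar>" "\<bar>c\<bar>"] assms
    by (simp add: abs_mult)
  moreover have "0 < (1 - \<bar>x\<bar>) ^ 2" using assms by simp
  ultimately show ?thesis by (simp add: power2_eq_square algebra_simps)
qed

text \<open>The generating function of the Chebyshev polynomials \<open>T\<^sub>n(cos t) = cos (n t)\<close>,
obtained from \<open>cos ((n + 2) t) = 2 cos t cos ((n + 1) t) - cos (n t)\<close>.\<close>

lemma cos_power_series_sums:
  assumes x: "\<bar>x\<bar> < 1"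
  shows "(\<lambda>n. cos (real n * t) * x ^ n) sums ((1 - cos t * x) / (1 - 2 * cos t * x + x ^ 2))"
proof -
  define f where "f n = cos (real n * t) * x ^ n" for n
  define g where "g = (\<Sum>n. f n)"
  have f0: "f sums g"
    using summable_abs_cos_power_series[OF x, of t] summable_rabs_cancel
    by (auto simp: g_def f_def[abs_def] summable_sums)
  have f1: "(\<lambda>n. f (Suc n)) sums (g - 1)"
    using f0 by (subst sums_Suc_iff) (simp add: f_def)
  have f2: "(\<lambda>n. f (Suc (Suc n))) sums (g - 1 - cos t * x)"
    using f1 by (subst sums_Suc_iff) (simp add: f_def)
  have recurrence: "f (Suc (Suc n)) = 2 * cos t * x * f (Suc n) - x ^ 2 * f n" for n
  proof -
    have C: "cos (real (Suc (Suc n)) * t) = 2 * cos t * cos (real (Suc n) * t) - cos (real n * t)"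
      using cos_add[of "real (Suc n) * t" t] cos_diff[of "real (Suc n) * t" t]
      by (simp add: algebra_simps)
    show ?thesis
      unfolding f_def C by (simp add: power2_eq_square algebra_simps)
  qed
  have "(\<lambda>n. 2 * cos t * x * f (Suc n) - x ^ 2 * f n) sums (2 * cos t * x * (g - 1) - x ^ 2 * g)"
    by (intro sums_diff sums_mult f0 f1)
  then have "g - 1 - cos t * x = 2 * cos t * x * (g - 1) - x ^ 2 * g"
    using f2 by (simp add: recurrence sums_unique2)
  then have "g = (1 - cos t * x) / (1 - 2 * cos t * x + x ^ 2)"
    using quadratic_denominator_pos[of "cos t" x] x by (simp add: field_simps)
  then show ?thesis using f0 by (simp add: f_def[abs_def])
qed

text \<open>\<open>cos_psum j t n\<close> is the coefficient of \<open>x\<^sup>n\<close> in \<open>(\<Sum>\<^sub>k cos (k t) x\<^sup>k) / (1 - x)\<^sup>j\<close>.\<close>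

fun cos_psum :: "nat \<Rightarrow> real \<Rightarrow> nat \<Rightarrow> real" where
  "cos_psum 0 t n = cos (real n * t)"
| "cos_psum (Suc j) t n = (\<Sum>k\<le>n. cos_psum j t k)"

lemma cos_psum_0 [simp]: "cos_psum j t 0 = 1"
  by (induction j) auto

lemma cos_psum_power_series:
  assumes x: "\<bar>x\<bar> < 1"
  shows "summable (\<lambda>n. \<bar>cos_psum j t n * x ^ n\<bar>)
    \<and> (\<lambda>n. cos_psum j t n * x ^ n) sums ((\<Sum>n. cos (real n * t) * x ^ n) / (1 - x) ^ j)"
proof (induction j)
  case 0
  then show ?case
    using summable_abs_cos_power_series[OF x, of t] summable_rabs_cancel
    by (auto simp: summable_sums)
next
  case (Suc j)
  then show ?case
    using partial_sums_power_series[OF x, of "\<lambda>n. cos_psum j t n"]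
    by (auto simp: sums_iff ac_simps)
qed

lemma sum_cos_reflect:
  "(\<Sum>k\<le>n. cos (real (Suc n - k) * t)) = (\<Sum>k\<le>n. cos (real (Suc k) * t))"
  by (rule sum.reindex_bij_witness[where i="\<lambda>k. n - k" and j="\<lambda>k. n - k"])
     (auto simp: Suc_diff_le)

text \<open>Fej\'er's identity \<open>|\<Sum>\<^sub>k\<^sub>\<le>\<^sub>n e\<^sup>i\<^sup>k\<^sup>t|\<^sup>2 = 2 \<Sum>\<^sub>k\<^sub>\<le>\<^sub>n \<Sum>\<^sub>l\<^sub>\<le>\<^sub>k cos (l t) - (n + 1)\<close>, written with real parts.\<close>

lemma fejer_identity:
  "(\<Sum>k\<le>n. cos (real k * t)) ^ 2 + (\<Sum>k\<le>n. sin (real k * t)) ^ 2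
     = 2 * cos_psum 2 t n - (real n + 1)"
proof (induction n)
  case 0
  then show ?case by (simp add: numeral_2_eq_2)
next
  case (Suc n)
  define A where "A = (\<Sum>k\<le>n. cos (real k * t))"
  define B where "B = (\<Sum>k\<le>n. sin (real k * t))"
  define s where "s = real (Suc n) * t"
  have cross: "A * cos s + B * sin s = (\<Sum>k\<le>Suc n. cos (real k * t)) - 1"
  proof -
    have "A * cos s + B * sin s = (\<Sum>k\<le>n. cos (real k * t) * cos s + sin (real k * t) * sin s)"
      by (simp only: A_def B_def sum_distrib_right sum.distrib)
    also have "\<dots> = (\<Sum>k\<le>n. cos (s - real k * t))"
      by (rule sum.cong) (auto simp: cos_diff)
    also have "\<dots> = (\<Sum>k\<le>n. cos (real (Suc n - k) * t))"
      by (rule sum.cong) (auto simp: s_def of_nat_diff left_diff_distrib)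
    also have "\<dots> = (\<Sum>k\<le>n. cos (real (Suc k) * t))"
      by (rule sum_cos_reflect)
    also have "\<dots> = (\<Sum>k\<le>Suc n. cos (real k * t)) - 1"
      by (subst sum.atMost_Suc_shift) simp
    finally show ?thesis .
  qed
  have "(\<Sum>k\<le>Suc n. cos (real k * t)) ^ 2 + (\<Sum>k\<le>Suc n. sin (real k * t)) ^ 2
      = A ^ 2 + B ^ 2 + 2 * (A * cos s + B * sin s) + 1"
    by (simp add: A_def B_def s_def power2_eq_square algebra_simps)
  also have "\<dots> = 2 * cos_psum 2 t (Suc n) - (real (Suc n) + 1)"
    using Suc.IH unfolding cross by (simp add: A_def B_def numeral_2_eq_2)
  finally show ?case .
qed

lemma cos_psum_2_ge: "(real n + 1) / 2 \<le> cos_psum 2 t n"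
proof -
  have "0 \<le> (\<Sum>k\<le>n. cos (real k * t)) ^ 2 + (\<Sum>k\<le>n. sin (real k * t)) ^ 2"
    by simp
  then show ?thesis using fejer_identity[where n=n and t=t] by (simp del: cos_psum.simps)
qed

lemma cos_psum_ge:
  assumes "1 \<le> j" and "1 \<le> n"
  shows "real j \<le> cos_psum (Suc j) t n"
  using assms
proof (induction j arbitrary: n rule: dec_induct)
  case base
  then show ?case using cos_psum_2_ge[of n t] by (simp add: numeral_2_eq_2)
next
  case (step j)
  obtain n' where n: "n = Suc n'" using step.prems by (cases n) auto
  have "(\<Sum>k\<le>n'. real j) \<le> (\<Sum>k\<le>n'. cos_psum (Suc j) t (Suc k))"
    by (intro sum_mono step.IH) simp
  moreover have "real j \<le> (\<Sum>k\<le>n'. real j)" by (simp add: distrib_right)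
  moreover have "cos_psum (Suc (Suc j)) t n = 1 + (\<Sum>k\<le>n'. cos_psum (Suc j) t (Suc k))"
    by (simp only: cos_psum.simps(2)[of "Suc j"] n sum.atMost_Suc_shift cos_psum_0)
  ultimately show ?case by simp
qed

definition W_coeff :: "nat \<Rightarrow> real \<Rightarrow> nat \<Rightarrow> real" where
  "W_coeff m t n = (if n = 0 then 0 else cos_psum (Suc m) t n - real m)"

lemma W_coeff_nonneg:
  assumes "1 \<le> m"
  shows "0 \<le> W_coeff m t n"
  using cos_psum_ge[OF assms, of n t] by (simp add: W_coeff_def)

lemma W_power_series_sums:
  assumes x: "\<bar>x\<bar> < 1"
  shows "(\<lambda>n. W_coeff m t n * x ^ n) sums W m (cos t) x"
proof -
  have P: "(\<lambda>n. cos_psum (Suc m) t n * x ^ n)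
      sums ((1 - cos t * x) / (1 - 2 * cos t * x + x ^ 2) / (1 - x) ^ Suc m)"
    using cos_psum_power_series[OF x, of "Suc m" t]
    by (simp add: cos_power_series_sums[OF x, THEN sums_unique, symmetric])
  have G: "(\<lambda>n. real m * x ^ n) sums (real m * (1 / (1 - x)))"
    using x by (intro sums_mult geometric_sums) simp
  have E: "(\<lambda>n. if n = 0 then real m - 1 else 0) sums (real m - 1)"
    using sums_single[of 0 "\<lambda>_. real m - 1"] by simp
  have "(\<lambda>n. cos_psum (Suc m) t n * x ^ n - real m * x ^ n + (if n = 0 then real m - 1 else 0))
      sums ((1 - cos t * x) / (1 - 2 * cos t * x + x ^ 2) / (1 - x) ^ Suc m
            - real m * (1 / (1 - x)) + (real m - 1))"
    by (intro sums_add sums_diff P G E)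
  moreover have "(\<lambda>n. cos_psum (Suc m) t n * x ^ n - real m * x ^ n
      + (if n = 0 then real m - 1 else 0)) = (\<lambda>n. W_coeff m t n * x ^ n)"
    by (auto simp: W_coeff_def algebra_simps simp del: cos_psum.simps)
  ultimately show ?thesis
    by (simp add: W_def algebra_simps del: cos_psum.simps)
qed

theorem theorem6:
  fixes m :: nat and \<omega> :: real
  assumes "m \<ge> 1" and "-1 \<le> \<omega>" and "\<omega> \<le> 1"
  shows "absolutely_monotonic_on {0<..<1} (W m \<omega>)"
proof -
  define t where "t = arccos \<omega>"
  have \<omega>: "\<omega> = cos t" using assms by (simp add: t_def cos_arccos)
  show ?thesis
  proof (rule absolutely_monotonic_on_power_series)
    show "0 \<le> W_coeff m t n" for n using W_coeff_nonneg[OF \<open>m \<ge> 1\<close>] .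
    show "summable (\<lambda>n. W_coeff m t n * x ^ n)" if "\<bar>x\<bar> < 1" for x
      using W_power_series_sums[OF that] by (rule sums_summable)
    show "W m \<omega> x = (\<Sum>n. W_coeff m t n * x ^ n)" if "x \<in> {0<..<1}" for x
      using W_power_series_sums[of x m t] that by (simp add: \<omega> sums_iff)
  qed auto
qed

end
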